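(* The minimal Dress ring $D$ of $\mathbb{R}(X)$ is a Dedekind domain.
   Context: $D$ denotes the minimal Dress ring of the field $\mathbb{R}(X)$, i.e. the subring of $\mathbb{R}(X)$ generated by $\mathbb{Z}$ and all elements $1/(1+h^2)$ with $h\in\mathbb{R}(X)$. *)

theory Defs
  imports "HOL-Algebra.Ring_Divisibility" "HOL-Computational_Algebra.Fraction_Field"
    "HOL-Computational_Algebra.Polynomial"
begin

text \<open>The rational function field R(X) is the type real poly fract.\<close>

definition is_subring :: "'a::field set \<Rightarrow> bool" where
  "is_subring S \<longleftrightarrow> 0 \<in> S \<and> 1 \<in> S \<and> (\<forall>a\<in>S. \<forall>b\<in>S. a + b \<in> S \<and> a - b \<in> S \<and> a * b \<in> S)"

definition minimal_Dress_ring :: "real poly fract set" where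
  "minimal_Dress_ring =
     \<Inter>{S. is_subring S \<and> (\<forall>h::real poly fract. 1 / (1 + h^2) \<in> S)}"

definition sub_ring_struct :: "'a::field set \<Rightarrow> 'a ring" where
  "sub_ring_struct S = \<lparr>carrier = S, monoid.mult = (*), one = 1, ring.zero = 0, add = (+)\<rparr>"

definition integral_over :: "'a::field set \<Rightarrow> 'a \<Rightarrow> bool" where
  "integral_over S x \<longleftrightarrow>
     (\<exists>p::'a poly. degree p \<ge> 1 \<and> lead_coeff p = 1 \<and> (\<forall>i. coeff p i \<in> S) \<and> poly p x = 0)"

definition frac_field_in :: "'a::field set \<Rightarrow> 'a set" where
  "frac_field_in S = {a / b | a b. a \<in> S \<and> b \<in> S \<and> b \<noteq> 0}"

definition integrally_closed_sub :: "'a::field set \<Rightarrow> bool" where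
  "integrally_closed_sub S \<longleftrightarrow> (\<forall>x\<in>frac_field_in S. integral_over S x \<longrightarrow> x \<in> S)"

definition Dedekind_subring :: "'a::field set \<Rightarrow> bool" where
  "Dedekind_subring S \<longleftrightarrow>
     noetherian_domain (sub_ring_struct S) \<and>
     integrally_closed_sub S \<and>
     (\<forall>P. primeideal P (sub_ring_struct S) \<and> P \<noteq> {0} \<longrightarrow> maximalideal P (sub_ring_struct S))"

end

theory Submission
  imports Defs "HOL-Computational_Algebra.Computational_Algebra" "HOL-Computational_Algebra.Field_as_Ring"
begin

text \<open>Let A be the ring of rational functions without real poles and u = 1 / (1 + X^2). Splitting
  denominators into real quadratic factors shows that u^n x \<in> D for every x \<in> A and some n,
  and A is a principal ideal domain by Euclidean division of numerators. The substitution
  X \<mapsto> 1 / X preserves D and exchanges u and 1 - u, and since u and 1 - u are comaximal, an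
  ideal of D contains x as soon as it contains u^N x and (1 - u)^M x. Applying the properties
  of A to an ideal of D and to its image under X \<mapsto> 1 / X shows that every ideal of D is
  generated by two elements, that nonzero prime ideals are maximal, and that D is integrally
  closed.\<close>

section \<open>Polynomials and fractions\<close>

lemma map_poly_add_hom:
  assumes "f 0 = 0" and "\<And>x y. f (x + y) = f x + f y"
  shows "map_poly f (p + q) = map_poly f p + map_poly f q"
  by (intro poly_eqI) (simp add: coeff_map_poly assms)

lemma map_poly_mult_hom:
  fixes f :: "'a::comm_ring_1 \<Rightarrow> 'b::comm_ring_1"
  assumes f0: "f 0 = 0" and f_add: "\<And>x y. f (x + y) = f x + f y"
    and f_mult: "\<And>x y. f (x * y) = f x * f y"
  shows "map_poly f (p * q) = map_poly f p * map_poly f q"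
proof (induction p)
  case (pCons a p)
  have "map_poly f (pCons a p * q) = map_poly f (smult a q) + map_poly f (pCons 0 (p * q))"
    by (simp add: map_poly_add_hom[OF f0 f_add])
  also have "\<dots> = map_poly f (pCons a p) * map_poly f q"
    using pCons by (simp add: map_poly_smult[OF f0 f_mult] map_poly_pCons[of f, OF f0] f0)
  finally show ?case .
qed simp

lemma poly_map_poly_eval_hom:
  fixes f :: "'a::comm_ring_1 \<Rightarrow> 'b::comm_ring_1"
  assumes f0: "f 0 = 0" and "\<And>x y. f (x + y) = f x + f y" and "\<And>x y. f (x * y) = f x * f y"
  shows "poly (map_poly f p) (f x) = f (poly p x)"
  by (induction p) (simp_all add: assms map_poly_pCons[of f, OF f0])

lemma degree_le_1_poly_eq: "degree (p :: 'a::zero poly) \<le> 1 \<Longrightarrow> p = [:coeff p 0, coeff p 1:]"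
  by (rule poly_eqI) (auto simp: coeff_pCons coeff_eq_0 split: nat.split)

lemma coprime_poly_no_common_root:
  fixes a b :: "'a::field poly"
  assumes "coprime a b" and "poly a x = 0" and "poly b x = 0"
  shows False
proof -
  have "[:-x, 1:] dvd a" "[:-x, 1:] dvd b"
    using assms(2,3) by (simp_all add: poly_eq_0_iff_dvd)
  then have "is_unit [:-x, 1:]"
    using assms(1) coprime_common_divisor by blast
  then show False
    by (simp add: is_unit_iff_degree)
qed

text \<open>A complex root z = a + bi of q is not real, so the real quadratic with roots z, cnj z
  divides q: the remainder has degree at most 1 and vanishes at the non-real point z.\<close>
lemma real_poly_quadratic_factor:
  fixes q :: "real poly"
  assumes "degree q \<ge> 1" and no_roots: "\<forall>x. poly q x \<noteq> 0"
  obtains a b r where "b \<noteq> 0" and "q = [:a^2 + b^2, -2 * a, 1:] * r"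
proof -
  let ?C = "map_poly complex_of_real"
  have C_hom: "complex_of_real 0 = 0"
    "\<And>x y. complex_of_real (x + y) = complex_of_real x + complex_of_real y"
    "\<And>x y. complex_of_real (x * y) = complex_of_real x * complex_of_real y"
    by simp_all
  have "degree (?C q) \<noteq> 0"
    using assms(1) by (simp add: degree_map_poly)
  then obtain z where z: "poly (?C q) z = 0"
    using fundamental_theorem_of_algebra_alt by (metis degree_pCons_0)
  define a b where "a = Re z" and "b = Im z"
  have "b \<noteq> 0"
  proof
    assume "b = 0"
    then have "z = of_real a"
      unfolding a_def b_def by (simp add: complex_eq_iff)
    with z no_roots show False
      using poly_map_poly_eval_hom[OF C_hom, of q a] by simp
  qed
  define g where "g = [:a^2 + b^2, -2 * a, 1:]"
  have "g \<noteq> 0" "degree g = 2"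
    unfolding g_def by simp_all
  define r where "r = q mod g"
  have "degree r \<le> 1"
    using degree_mod_less[OF \<open>g \<noteq> 0\<close>, of q] \<open>degree g = 2\<close> unfolding r_def by fastforce
  then have r: "r = [:coeff r 0, coeff r 1:]"
    by (rule degree_le_1_poly_eq)
  have g_root: "poly (?C g) z = 0"
    unfolding g_def a_def b_def
    by (simp add: map_poly_pCons complex_eq_iff power2_eq_square algebra_simps)
  have "q = g * (q div g) + r"
    unfolding r_def by simp
  then have "poly (?C q) z = poly (?C (g * (q div g) + r)) z"
    by simp
  also have "\<dots> = poly (?C g) z * poly (?C (q div g)) z + poly (?C r) z"
    by (simp only: map_poly_add_hom[OF C_hom(1,2)] map_poly_mult_hom[OF C_hom] poly_add poly_mult)
  finally have "poly (?C q) z = poly (?C g) z * poly (?C (q div g)) z + poly (?C r) z" .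
  then have "poly (?C [:coeff r 0, coeff r 1:]) z = 0"
    using z r g_root by simp
  then have "coeff r 0 + a * coeff r 1 = 0" "b * coeff r 1 = 0"
    unfolding a_def b_def by (simp_all add: map_poly_pCons complex_eq_iff)
  with \<open>b \<noteq> 0\<close> have "r = 0"
    by (subst r) simp
  then have "q = g * (q div g)"
    using \<open>q = g * (q div g) + r\<close> by simp
  with \<open>b \<noteq> 0\<close> show thesis
    unfolding g_def by (rule that)
qed

lemma to_fract_power [simp]: "to_fract (p ^ n) = to_fract p ^ n"
  by (induction n) simp_all

lemma fract_eq_quot_of_fract: "x = to_fract (fst (quot_of_fract x)) / to_fract (snd (quot_of_fract x))"
  by (metis Fract_conv_to_fract Fract_quot_of_fract)

lemma fract_as_quotient:
  fixes x :: "'a :: {ring_gcd, semiring_gcd_mult_normalize, idom_divide} fract"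
  obtains p q where "q \<noteq> 0" and "x = to_fract p / to_fract q"
  by (rule that[OF snd_quot_of_fract_nonzero fract_eq_quot_of_fract[of x]])

section \<open>Ideals of subrings\<close>

text \<open>Plain predicates rather than HOL-Algebra ideals, since they are transported along
  maps of the ambient ring more easily.\<close>
definition ideal_in :: "'a::comm_ring_1 set \<Rightarrow> 'a set \<Rightarrow> bool" where
  "ideal_in R I \<longleftrightarrow> I \<subseteq> R \<and> 0 \<in> I \<and> (\<forall>x\<in>I. \<forall>y\<in>I. x + y \<in> I) \<and> (\<forall>r\<in>R. \<forall>x\<in>I. r * x \<in> I)"

definition prime_ideal_in :: "'a::comm_ring_1 set \<Rightarrow> 'a set \<Rightarrow> bool" where
  "prime_ideal_in R P \<longleftrightarrow> ideal_in R P \<and> 1 \<notin> P \<and> (\<forall>a\<in>R. \<forall>b\<in>R. a * b \<in> P \<longrightarrow> a \<in> P \<or> b \<in> P)"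

lemma ideal_inD:
  assumes "ideal_in R I"
  shows ideal_in_subset: "I \<subseteq> R" and ideal_in_0: "0 \<in> I"
    and ideal_in_add: "x \<in> I \<Longrightarrow> y \<in> I \<Longrightarrow> x + y \<in> I"
    and ideal_in_mult: "r \<in> R \<Longrightarrow> x \<in> I \<Longrightarrow> r * x \<in> I"
  using assms unfolding ideal_in_def by auto

lemma prime_ideal_inD:
  assumes "prime_ideal_in R P"
  shows "ideal_in R P" and "1 \<notin> P" and "a \<in> R \<Longrightarrow> b \<in> R \<Longrightarrow> a * b \<in> P \<Longrightarrow> a \<in> P \<or> b \<in> P"
  using assms unfolding prime_ideal_in_def by auto

text \<open>Since u and 1 - u generate the unit ideal, a set closed under addition and under
  multiplication by u and by 1 - u contains x as soon as it contains u^N x and (1 - u)^M x.\<close>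
lemma mem_if_comaximal_power_multiples:
  fixes u x :: "'a::comm_ring_1"
  assumes add: "\<And>a b. a \<in> S \<Longrightarrow> b \<in> S \<Longrightarrow> a + b \<in> S"
    and mult_u: "\<And>a. a \<in> S \<Longrightarrow> u * a \<in> S"
    and mult_v: "\<And>a. a \<in> S \<Longrightarrow> (1 - u) * a \<in> S"
    and "u ^ N * x \<in> S" and "(1 - u) ^ M * x \<in> S"
  shows "x \<in> S"
proof -
  have mult_u_power: "u ^ k * a \<in> S" if "a \<in> S" for k a
    using that by (induction k) (auto simp: mult.assoc dest: mult_u)
  have base: "a \<in> S" if "u * a \<in> S" and "(1 - u) ^ M * a \<in> S" for a
    using that
  proof (induction M arbitrary: a)
    case (Suc M)
    have "u * ((1 - u) * a) = (1 - u) * (u * a)"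
      by (simp add: algebra_simps)
    then have "u * ((1 - u) * a) \<in> S"
      using mult_v[OF Suc.prems(1)] by metis
    moreover have "(1 - u) ^ M * ((1 - u) * a) \<in> S"
      using Suc.prems(2) by (simp add: algebra_simps)
    ultimately have "(1 - u) * a \<in> S"
      by (rule Suc.IH)
    moreover have "a = u * a + (1 - u) * a"
      by (simp add: algebra_simps)
    ultimately show ?case
      using add[OF Suc.prems(1)] by metis
  qed simp
  show ?thesis
    using assms(4,5)
  proof (induction N arbitrary: x)
    case (Suc N)
    have "u * (u ^ N * x) \<in> S"
      using Suc.prems(1) by (simp add: algebra_simps)
    moreover have "(1 - u) ^ M * (u ^ N * x) = u ^ N * ((1 - u) ^ M * x)"
      by (simp add: algebra_simps)
    then have "(1 - u) ^ M * (u ^ N * x) \<in> S"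
      using mult_u_power[OF Suc.prems(2)] by metis
    ultimately have "u ^ N * x \<in> S"
      by (rule base)
    then show ?case
      using Suc.IH Suc.prems(2) by blast
  qed simp
qed

lemma ideal_in_image_involution:
  fixes f :: "'a::comm_ring_1 \<Rightarrow> 'a"
  assumes add: "\<And>x y. f (x + y) = f x + f y" and mult: "\<And>x y. f (x * y) = f x * f y"
    and inv: "\<And>x. f (f x) = x" and R: "\<And>x. x \<in> R \<Longrightarrow> f x \<in> R"
    and I: "ideal_in R I"
  shows "ideal_in R (f ` I)"
proof -
  have "f 0 = 0"
    using add[of 0 0] by simp
  then have "0 \<in> f ` I"
    using ideal_in_0[OF I] by force
  moreover have "f x + f y \<in> f ` I" if "x \<in> I" "y \<in> I" for x y
    using ideal_in_add[OF I that] add[of x y] by (metis image_eqI)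
  moreover have "r * f x \<in> f ` I" if "r \<in> R" "x \<in> I" for r x
    using ideal_in_mult[OF I R[OF \<open>r \<in> R\<close>] \<open>x \<in> I\<close>] by (metis image_eqI inv mult)
  ultimately show ?thesis
    using ideal_in_subset[OF I] R unfolding ideal_in_def by blast
qed

lemma prime_ideal_in_image_involution:
  fixes f :: "'a::comm_ring_1 \<Rightarrow> 'a"
  assumes add: "\<And>x y. f (x + y) = f x + f y" and mult: "\<And>x y. f (x * y) = f x * f y"
    and inv: "\<And>x. f (f x) = x" and R: "\<And>x. x \<in> R \<Longrightarrow> f x \<in> R" and "f 1 = 1"
    and P: "prime_ideal_in R P"
  shows "prime_ideal_in R (f ` P)"
proof -
  have mem: "f x \<in> f ` P \<longleftrightarrow> x \<in> P" for x
    by (metis image_iff inv)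
  have "a \<in> f ` P \<or> b \<in> f ` P" if "a \<in> R" "b \<in> R" "a * b \<in> f ` P" for a b
  proof -
    have "f a * f b \<in> P"
      using that(3) mem[of "f a * f b"] by (simp add: inv flip: mult)
    then have "f a \<in> P \<or> f b \<in> P"
      using prime_ideal_inD(3)[OF P] R that(1,2) by blast
    then show ?thesis
      using mem inv by metis
  qed
  moreover have "1 \<notin> f ` P"
    using mem[of 1] prime_ideal_inD(2)[OF P] \<open>f 1 = 1\<close> by simp
  ultimately show ?thesis
    using ideal_in_image_involution[OF add mult inv R prime_ideal_inD(1)[OF P]]
    unfolding prime_ideal_in_def by blast
qed

lemma integral_over_image_involution:
  fixes f :: "'a::field \<Rightarrow> 'a"
  assumes add: "\<And>x y. f (x + y) = f x + f y" and mult: "\<And>x y. f (x * y) = f x * f y"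
    and inv: "\<And>x. f (f x) = x" and "f 1 = 1" and S: "\<And>x. x \<in> S \<Longrightarrow> f x \<in> S"
    and "integral_over S x"
  shows "integral_over S (f x)"
proof -
  obtain p where p: "degree p \<ge> 1" "lead_coeff p = 1" "\<forall>i. coeff p i \<in> S" "poly p x = 0"
    using assms(6) unfolding integral_over_def by blast
  have f0: "f 0 = 0"
    using add[of 0 0] by (metis add.right_neutral add_left_cancel)
  have "degree (map_poly f p) = degree p"
    by (rule degree_map_poly) (metis f0 inv)
  moreover have "poly (map_poly f p) (f x) = 0"
    using poly_map_poly_eval_hom[OF f0 add mult, of p x] p(4) f0 by simp
  ultimately show ?thesis
    unfolding integral_over_def using p \<open>f 1 = 1\<close> S
    by (intro exI[of _ "map_poly f p"]) (auto simp: coeff_map_poly f0)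
qed

section \<open>The minimal Dress ring and the real constants\<close>

abbreviation D :: "real poly fract set" where
  "D \<equiv> minimal_Dress_ring"

lemma is_subring_D: "is_subring D"
  unfolding minimal_Dress_ring_def is_subring_def by auto

lemma inverse_one_plus_square_in_D: "1 / (1 + h^2) \<in> D"
  unfolding minimal_Dress_ring_def by auto

lemma D_minimal: "is_subring S \<Longrightarrow> (\<And>h. 1 / (1 + h^2) \<in> S) \<Longrightarrow> D \<subseteq> S"
  unfolding minimal_Dress_ring_def by auto

lemma
  shows D_0: "0 \<in> D" and D_1: "1 \<in> D"
    and D_add: "a \<in> D \<Longrightarrow> b \<in> D \<Longrightarrow> a + b \<in> D"
    and D_diff: "a \<in> D \<Longrightarrow> b \<in> D \<Longrightarrow> a - b \<in> D"
    and D_mult: "a \<in> D \<Longrightarrow> b \<in> D \<Longrightarrow> a * b \<in> D"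
  using is_subring_D unfolding is_subring_def by auto

lemma D_uminus: "a \<in> D \<Longrightarrow> - a \<in> D"
  using D_diff[OF D_0] by simp

lemma D_power: "a \<in> D \<Longrightarrow> a ^ n \<in> D"
  by (induction n) (auto intro: D_mult D_1)

lemma D_sum: "(\<And>i. i \<in> I \<Longrightarrow> f i \<in> D) \<Longrightarrow> sum f I \<in> D"
  by (induction I rule: infinite_finite_induct) (auto intro: D_add D_0)

lemma D_of_int: "of_int k \<in> D"
  by (induction k rule: int_induct[where k = 0]) (auto intro: D_add D_diff D_0 D_1)

definition const_fract :: "real \<Rightarrow> real poly fract" where
  "const_fract c = to_fract [:c:]"

lemma const_fract_simps [simp]:
  "const_fract 0 = 0"
  "const_fract 1 = 1"
  "const_fract (a + b) = const_fract a + const_fract b"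
  "const_fract (a - b) = const_fract a - const_fract b"
  "const_fract (a * b) = const_fract a * const_fract b"
  "const_fract (- a) = - const_fract a"
  "const_fract a = 0 \<longleftrightarrow> a = 0"
  by (simp_all add: const_fract_def flip: one_pCons to_fract_add to_fract_diff to_fract_mult
      to_fract_uminus)

lemma const_fract_power [simp]: "const_fract (a ^ n) = const_fract a ^ n"
  by (induction n) simp_all

lemma const_fract_divide [simp]: "const_fract (a / b) = const_fract a / const_fract b"
proof (cases "b = 0")
  case False
  then have "const_fract (a / b) * const_fract b = const_fract a"
    by (simp flip: const_fract_simps(5))
  then show ?thesis
    using False by (simp add: field_simps)
qed simp

lemma const_fract_of_int [simp]: "const_fract (of_int k) = of_int k"
  by (induction k rule: int_induct[where k = 0]) simp_all

lemma const_fract_numeral [simp]: "const_fract (numeral n) = numeral n"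
  by (metis const_fract_of_int of_int_numeral)

text \<open>Every real number is an integer minus some t \<in> (0, 1], and t = 1 / (1 + h^2)
  for h = sqrt (1 / t - 1).\<close>
lemma const_fract_in_D: "const_fract c \<in> D"
proof -
  define t where "t = 1 - (c - of_int \<lfloor>c\<rfloor>)"
  have t: "0 < t" "t \<le> 1"
    unfolding t_def by linarith+
  define h where "h = sqrt (1 / t - 1)"
  have "h^2 = 1 / t - 1"
    unfolding h_def using t by simp
  then have "t = 1 / (1 + h^2)"
    using t by simp
  then have "const_fract t = 1 / (1 + const_fract h ^ 2)"
    by simp
  then have "const_fract t \<in> D"
    using inverse_one_plus_square_in_D by simp
  moreover have "c = of_int (\<lfloor>c\<rfloor> + 1) - t"
    unfolding t_def by simp
  ultimately show ?thesis
    by (metis const_fract_simps(4) const_fract_of_int D_diff D_of_int)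
qed

definition X_fract :: "real poly fract" where
  "X_fract = to_fract [:0, 1:]"

definition subst_fract :: "real poly \<Rightarrow> real poly fract \<Rightarrow> real poly fract" where
  "subst_fract p t = poly (map_poly const_fract p) t"

lemma subst_fract_pCons: "subst_fract (pCons a p) t = const_fract a + t * subst_fract p t"
  by (simp add: subst_fract_def map_poly_pCons)

lemma subst_fract_add: "subst_fract (p + q) t = subst_fract p t + subst_fract q t"
  unfolding subst_fract_def by (simp add: map_poly_add_hom)

lemma subst_fract_mult: "subst_fract (p * q) t = subst_fract p t * subst_fract q t"
  unfolding subst_fract_def by (simp add: map_poly_mult_hom)

lemma subst_fract_0 [simp]: "subst_fract 0 t = 0"
  by (simp add: subst_fract_def)

lemma subst_fract_const [simp]: "subst_fract [:c:] t = const_fract c"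
  by (simp add: subst_fract_pCons)

lemma subst_fract_1 [simp]: "subst_fract 1 t = 1"
  using subst_fract_const[of 1] by (simp flip: one_pCons)

lemma to_fract_eq_subst_X: "to_fract p = subst_fract p X_fract"
proof (induction p)
  case (pCons a p)
  have "to_fract (pCons a p) = to_fract ([:a:] + [:0, 1:] * p)"
    by simp
  also have "\<dots> = const_fract a + X_fract * to_fract p"
    by (simp only: to_fract_add to_fract_mult const_fract_def X_fract_def)
  finally show ?case
    using pCons by (simp add: subst_fract_pCons)
qed simp

lemma to_fract_eq_sum_monomials:
  "to_fract p = (\<Sum>i\<le>degree p. const_fract (coeff p i) * X_fract ^ i)"
proof -
  have "degree (map_poly const_fract p) = degree p"
    by (rule degree_map_poly) simp
  then show ?thesis
    by (simp add: to_fract_eq_subst_X subst_fract_def poly_altdef coeff_map_poly)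
qed

section \<open>Rational functions without real poles\<close>

text \<open>With h = (1 - s) / (1 + s) one has 1 / (1 + h^2) = 1/2 + s / (1 + s^2).\<close>
lemma frac_one_plus_square_in_D: "s / (1 + s^2) \<in> D"
proof -
  have two: "(2 :: real poly fract) \<noteq> 0"
    by (metis const_fract_numeral const_fract_simps(7) zero_neq_numeral)
  consider "1 + s^2 = 0" | "s = -1" | "1 + s^2 \<noteq> 0" "1 + s \<noteq> 0"
    by (metis add.commute add_eq_0_iff2)
  then show ?thesis
  proof cases
    case 2
    then have "s / (1 + s^2) = const_fract (- 1 / 2)"
      by (simp add: power2_eq_square)
    then show ?thesis
      by (metis const_fract_in_D)
  next
    case 3
    define h where "h = (1 - s) / (1 + s)"
    have "1 + h^2 = ((1 + s)^2 + (1 - s)^2) / (1 + s)^2"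
      using 3 unfolding h_def by (simp add: power_divide add_divide_distrib)
    also have "(1 + s)^2 + (1 - s)^2 = 2 * (1 + s^2)"
      by (simp add: power2_eq_square algebra_simps)
    finally have "1 + h^2 = 2 * (1 + s^2) / (1 + s)^2" .
    then have "s / (1 + s^2) = 1 / (1 + h^2) - const_fract (1 / 2)"
      using 3 two by (simp add: field_simps power2_eq_square)
    then show ?thesis
      by (metis D_diff inverse_one_plus_square_in_D const_fract_in_D)
  qed (simp add: D_0)
qed

lemma to_fract_quadratic:
  "to_fract [:a^2 + b^2, -2 * a, 1:] = (X_fract - const_fract a)^2 + const_fract b ^ 2"
  by (simp add: to_fract_eq_subst_X subst_fract_pCons power2_eq_square algebra_simps)

lemma monomial_over_quadratic_in_D:
  assumes "b \<noteq> 0" and "j \<le> 2"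
  shows "X_fract ^ j / to_fract [:a^2 + b^2, -2 * a, 1:] \<in> D"
proof -
  define G where "G = to_fract [:a^2 + b^2, -2 * a, 1:]"
  define s where "s = (X_fract - const_fract a) / const_fract b"
  have "G \<noteq> 0"
    unfolding G_def by simp
  have G: "G = const_fract b ^ 2 * (1 + s^2)"
    using assms(1) unfolding G_def to_fract_quadratic s_def by (simp add: field_simps)
  have inv: "1 / G \<in> D"
  proof -
    have "1 / G = const_fract (1 / b^2) * (1 / (1 + s^2))"
      unfolding G by simp
    then show ?thesis
      by (metis D_mult const_fract_in_D inverse_one_plus_square_in_D)
  qed
  have "(X_fract - const_fract a) / G = const_fract (1 / b) * (s / (1 + s^2))"
    using assms(1) unfolding G s_def by (simp add: power2_eq_square)
  then have "(X_fract - const_fract a) / G \<in> D"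
    by (metis D_mult const_fract_in_D frac_one_plus_square_in_D)
  moreover have "X_fract / G = (X_fract - const_fract a) / G + const_fract a * (1 / G)"
    by (simp add: diff_divide_distrib)
  ultimately have lin: "X_fract / G \<in> D"
    using D_add D_mult const_fract_in_D inv by metis
  have "X_fract ^ 2 = G - const_fract (a^2 + b^2) + const_fract (2 * a) * X_fract"
    unfolding G_def to_fract_quadratic by (simp add: power2_eq_square algebra_simps)
  then have "X_fract ^ 2 / G = 1 - const_fract (a^2 + b^2) * (1 / G) + const_fract (2 * a) * (X_fract / G)"
    using \<open>G \<noteq> 0\<close> by (simp add: field_simps)
  then have "X_fract ^ 2 / G \<in> D"
    by (metis D_1 D_add D_diff D_mult const_fract_in_D inv lin)
  moreover have "j = 0 \<or> j = 1 \<or> j = 2"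
    using assms(2) by auto
  ultimately show ?thesis
    using inv lin unfolding G_def by auto
qed

lemma monomial_over_root_free_in_D:
  fixes q :: "real poly"
  assumes "\<forall>x. poly q x \<noteq> 0" and "j \<le> degree q"
  shows "X_fract ^ j / to_fract q \<in> D"
  using assms
proof (induction "degree q" arbitrary: q j rule: less_induct)
  case less
  show ?case
  proof (cases "degree q = 0")
    case True
    then obtain c where "q = [:c:]"
      by (metis degree_eq_zeroE)
    moreover have "j = 0"
      using True less.prems(2) by simp
    ultimately have "X_fract ^ j / to_fract q = 1 / const_fract c"
      by (simp add: const_fract_def)
    also have "\<dots> = const_fract (1 / c)"
      by simp
    finally have "X_fract ^ j / to_fract q = const_fract (1 / c)" .
    then show ?thesis
      by (metis const_fract_in_D)
  next
    case False
    then have "degree q \<ge> 1"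
      by simp
    then obtain a b r where "b \<noteq> 0" and q: "q = [:a^2 + b^2, -2 * a, 1:] * r"
      using less.prems(1) by (rule real_poly_quadratic_factor)
    define g where "g = [:a^2 + b^2, -2 * a, 1:]"
    have "q \<noteq> 0"
      using less.prems(1) by auto
    then have "g \<noteq> 0" "r \<noteq> 0"
      using q unfolding g_def by auto
    moreover have "degree g = 2"
      unfolding g_def by simp
    ultimately have deg_q: "degree q = 2 + degree r"
      unfolding q g_def[symmetric] by (metis degree_mult_eq)
    have r_no_roots: "\<forall>x. poly r x \<noteq> 0"
      using less.prems(1) unfolding q g_def[symmetric] by (metis mult_zero_right poly_mult)
    define j1 j2 where "j1 = min j 2" and "j2 = j - min j 2"
    have "X_fract ^ j2 / to_fract r \<in> D"
      using less.hyps[OF _ r_no_roots] less.prems(2) deg_q unfolding j2_def by simp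
    moreover have "X_fract ^ j1 / to_fract g \<in> D"
      unfolding g_def j1_def by (rule monomial_over_quadratic_in_D[OF \<open>b \<noteq> 0\<close>]) simp
    moreover have "X_fract ^ j / to_fract q = (X_fract ^ j1 / to_fract g) * (X_fract ^ j2 / to_fract r)"
      unfolding q g_def[symmetric] j1_def j2_def by (simp flip: power_add)
    ultimately show ?thesis
      by (metis D_mult)
  qed
qed

definition regular_on_reals :: "real poly fract set" where
  "regular_on_reals = {to_fract p / to_fract q | p q. \<forall>x. poly q x \<noteq> 0}"

definition u_X :: "real poly fract" where
  "u_X = 1 / (1 + X_fract ^ 2)"

lemma u_X_in_D: "u_X \<in> D"
  unfolding u_X_def by (rule inverse_one_plus_square_in_D)

lemma one_plus_X_square: "1 + X_fract ^ 2 = to_fract [:1, 0, 1:]"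
  by (simp add: to_fract_eq_subst_X subst_fract_pCons power2_eq_square)

text \<open>Multiplying by u_X ^ deg p raises the degree of the denominator of p / q to at least
  deg p, and then the numerator is a sum of monomials over the denominator.\<close>
lemma regular_on_reals_imp_u_X_power_mult_in_D:
  assumes "x \<in> regular_on_reals"
  obtains n where "u_X ^ n * x \<in> D"
proof -
  obtain p q where x: "x = to_fract p / to_fract q" and q: "\<forall>x. poly q x \<noteq> 0"
    using assms unfolding regular_on_reals_def by blast
  define n where "n = degree p"
  define q' where "q' = q * [:1, 0, 1:] ^ n"
  have "poly [:1, 0, 1:] y = 1 + y^2" for y :: real
    by (simp add: power2_eq_square)
  moreover have "0 < 1 + y^2" for y :: real
    by (rule add_pos_nonneg) simp_all
  ultimately have "poly [:1, 0, 1:] y \<noteq> (0 :: real)" for y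
    by (metis less_irrefl)
  then have q': "\<forall>y. poly q' y \<noteq> 0"
    using q unfolding q'_def by (simp add: poly_power)
  have "q \<noteq> 0"
    using q by auto
  then have "degree p \<le> degree q'"
    unfolding q'_def n_def by (simp add: degree_mult_eq degree_power_eq)
  have "u_X ^ n * x = to_fract p / to_fract q'"
    unfolding x u_X_def q'_def one_plus_X_square by (simp add: power_one_over)
  also have "\<dots> = (\<Sum>i\<le>degree p. const_fract (coeff p i) * (X_fract ^ i / to_fract q'))"
    by (subst to_fract_eq_sum_monomials) (simp add: sum_divide_distrib)
  also have "\<dots> \<in> D"
    using \<open>degree p \<le> degree q'\<close>
    by (intro D_sum D_mult const_fract_in_D monomial_over_root_free_in_D[OF q']) simp
  finally show thesis
    by (rule that)
qed

lemma regular_on_reals_intro: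
  "\<forall>x. poly q x \<noteq> 0 \<Longrightarrow> to_fract p / to_fract q \<in> regular_on_reals"
  unfolding regular_on_reals_def by blast

lemma regular_on_reals_elim:
  assumes "x \<in> regular_on_reals"
  obtains p q where "x = to_fract p / to_fract q" and "\<forall>x. poly q x \<noteq> 0" and "to_fract q \<noteq> 0"
  using assms unfolding regular_on_reals_def by fastforce

lemma to_fract_in_regular_on_reals: "to_fract p \<in> regular_on_reals"
  using regular_on_reals_intro[of 1 p] by simp

lemma is_subring_regular_on_reals: "is_subring regular_on_reals"
proof -
  have "a + b \<in> regular_on_reals \<and> a - b \<in> regular_on_reals \<and> a * b \<in> regular_on_reals"
    if a_reg: "a \<in> regular_on_reals" and b_reg: "b \<in> regular_on_reals" for a b
  proof -
    obtain p q where a: "a = to_fract p / to_fract q" and q: "\<forall>x. poly q x \<noteq> 0" "to_fract q \<noteq> 0"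
      using a_reg by (rule regular_on_reals_elim)
    obtain p' q' where b: "b = to_fract p' / to_fract q'" and q': "\<forall>x. poly q' x \<noteq> 0" "to_fract q' \<noteq> 0"
      using b_reg by (rule regular_on_reals_elim)
    have qq': "\<forall>x. poly (q * q') x \<noteq> 0"
      using q q' by simp
    have "a + b = to_fract (p * q' + p' * q) / to_fract (q * q')"
      "a - b = to_fract (p * q' - p' * q) / to_fract (q * q')"
      "a * b = to_fract (p * p') / to_fract (q * q')"
      unfolding a b using q q' by (simp_all add: field_simps)
    then show ?thesis
      by (metis regular_on_reals_intro[OF qq'])
  qed
  moreover have "0 \<in> regular_on_reals" "1 \<in> regular_on_reals"
    using to_fract_in_regular_on_reals[of 0] to_fract_in_regular_on_reals[of 1] by simp_all
  ultimately show ?thesis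
    unfolding is_subring_def by blast
qed

lemma
  shows regular_on_reals_add: "a \<in> regular_on_reals \<Longrightarrow> b \<in> regular_on_reals \<Longrightarrow> a + b \<in> regular_on_reals"
    and regular_on_reals_mult: "a \<in> regular_on_reals \<Longrightarrow> b \<in> regular_on_reals \<Longrightarrow> a * b \<in> regular_on_reals"
  using is_subring_regular_on_reals unfolding is_subring_def by auto

text \<open>Writing h = a / b in lowest terms, 1 / (1 + h^2) = b^2 / (a^2 + b^2), and a^2 + b^2 has no
  real root since a and b have no common root.\<close>
lemma inverse_one_plus_square_in_regular_on_reals: "1 / (1 + h^2) \<in> regular_on_reals"
proof -
  define a b where "a = fst (quot_of_fract h)" and "b = snd (quot_of_fract h)"
  have h: "h = to_fract a / to_fract b"
    unfolding a_def b_def by (rule fract_eq_quot_of_fract)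
  have "coprime a b"
    unfolding a_def b_def by (rule coprime_quot_of_fract)
  have no_roots: "\<forall>x. poly (b^2 + a^2) x \<noteq> 0"
  proof (intro allI notI)
    fix x
    assume "poly (b^2 + a^2) x = 0"
    then have "poly b x = 0" "poly a x = 0"
      by (simp_all add: sum_power2_eq_zero_iff)
    then show False
      using coprime_poly_no_common_root[OF \<open>coprime a b\<close>] by blast
  qed
  then have "to_fract (b^2 + a^2) \<noteq> 0"
    by auto
  moreover have "to_fract b \<noteq> 0"
    unfolding b_def by simp
  ultimately have "1 / (1 + h^2) = to_fract (b^2) / to_fract (b^2 + a^2)"
    unfolding h by (simp add: field_simps power2_eq_square)
  then show ?thesis
    by (metis regular_on_reals_intro[OF no_roots])
qed

lemma D_subset_regular_on_reals: "D \<subseteq> regular_on_reals"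
  by (rule D_minimal[OF is_subring_regular_on_reals inverse_one_plus_square_in_regular_on_reals])

lemma common_denominator:
  fixes n :: nat
  shows "\<forall>i\<le>n. f i \<in> regular_on_reals \<Longrightarrow>
    \<exists>s. (\<forall>x. poly s x \<noteq> 0) \<and> (\<forall>i\<le>n. \<exists>e. to_fract s * f i = to_fract e)"
proof (induction n)
  case 0
  then obtain p q where "f 0 = to_fract p / to_fract q" "\<forall>x. poly q x \<noteq> 0" "to_fract q \<noteq> 0"
    using regular_on_reals_elim by blast
  then show ?case
    by (intro exI[of _ q]) auto
next
  case (Suc n)
  obtain s where s: "\<forall>x. poly s x \<noteq> 0" "\<forall>i\<le>n. \<exists>e. to_fract s * f i = to_fract e"
    using Suc by auto
  obtain p q where pq: "f (Suc n) = to_fract p / to_fract q" "\<forall>x. poly q x \<noteq> 0" "to_fract q \<noteq> 0"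
    using Suc.prems regular_on_reals_elim by blast
  have "\<exists>e. to_fract (s * q) * f i = to_fract e" if "i \<le> Suc n" for i
  proof (cases "i = Suc n")
    case True
    then show ?thesis
      using pq by (intro exI[of _ "s * p"]) simp
  next
    case False
    with that s(2) obtain e where "to_fract s * f i = to_fract e"
      by fastforce
    then show ?thesis
      by (intro exI[of _ "q * e"]) (simp add: algebra_simps)
  qed
  moreover have "\<forall>x. poly (s * q) x \<noteq> 0"
    using s(1) pq(2) by simp
  ultimately show ?case
    by blast
qed

text \<open>Write x = a / b in lowest terms and clear denominators in a monic equation of degree n
  over D: this gives a polynomial identity s a^n + b (\<dots>) = 0 with s free of real roots, so a
  real root of b would be a common root of a and b.\<close>
lemma integral_over_D_imp_regular_on_reals:
  assumes "integral_over D x"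
  shows "x \<in> regular_on_reals"
proof -
  from assms obtain p where p: "lead_coeff p = 1" "\<forall>i. coeff p i \<in> D" "poly p x = 0"
    unfolding integral_over_def by blast
  define n where "n = degree p"
  have "\<forall>i\<le>n. coeff p i \<in> regular_on_reals"
    using p(2) D_subset_regular_on_reals by blast
  then obtain s where s: "\<forall>x. poly s x \<noteq> 0" and se: "\<forall>i\<le>n. \<exists>e. to_fract s * coeff p i = to_fract e"
    using common_denominator by blast
  define e where "e i = (SOME e. to_fract s * coeff p i = to_fract e)" for i
  have e: "to_fract s * coeff p i = to_fract (e i)" if "i \<le> n" for i
    unfolding e_def using se that by (metis (mono_tags, lifting) someI_ex)
  have "e n = s"
    using e[of n] p(1) unfolding n_def by simp
  define a b where "a = fst (quot_of_fract x)" and "b = snd (quot_of_fract x)"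
  have x: "x = to_fract a / to_fract b"
    unfolding a_def b_def by (rule fract_eq_quot_of_fract)
  have "coprime a b" "to_fract b \<noteq> 0"
    unfolding a_def b_def by (simp_all add: coprime_quot_of_fract)
  have "\<forall>r. poly b r \<noteq> 0"
  proof (intro allI notI)
    fix r
    assume "poly b r = 0"
    define E where "E = (\<Sum>i\<le>n. e i * a ^ i * b ^ (n - i))"
    have pw: "x ^ i * to_fract b ^ n = to_fract a ^ i * to_fract b ^ (n - i)" if "i \<le> n" for i
    proof -
      have "to_fract b ^ n = to_fract b ^ i * to_fract b ^ (n - i)"
        using that by (simp flip: power_add)
      then show ?thesis
        using \<open>to_fract b \<noteq> 0\<close> unfolding x by (simp add: power_divide)
    qed
    have "to_fract E = (\<Sum>i\<le>n. to_fract (e i) * to_fract a ^ i * to_fract b ^ (n - i))"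
      unfolding E_def by simp
    also have "\<dots> = (\<Sum>i\<le>n. (to_fract s * coeff p i) * (x ^ i * to_fract b ^ n))"
      by (rule sum.cong) (simp_all add: e pw)
    also have "\<dots> = to_fract s * to_fract b ^ n * poly p x"
      unfolding poly_altdef n_def by (simp add: sum_distrib_left algebra_simps)
    finally have "E = 0"
      using p(3) by simp
    have "poly E r = (\<Sum>i\<le>n. poly (e i) r * poly a r ^ i * poly b r ^ (n - i))"
      unfolding E_def by (simp add: poly_sum poly_power)
    also have "\<dots> = poly (e n) r * poly a r ^ n"
      using \<open>poly b r = 0\<close> by (simp add: lessThan_Suc_atMost[symmetric] sum.neutral)
    finally have "poly a r = 0"
      using \<open>E = 0\<close> \<open>e n = s\<close> s by simp
    then show False
      using coprime_poly_no_common_root[OF \<open>coprime a b\<close> _ \<open>poly b r = 0\<close>] by blast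
  qed
  then show ?thesis
    unfolding x by (rule regular_on_reals_intro)
qed

section \<open>Ideals of D\<close>

lemma one_minus_u_X_in_D: "1 - u_X \<in> D"
  by (rule D_diff[OF D_1 u_X_in_D])

lemma ideal_in_D_D: "ideal_in D D"
  unfolding ideal_in_def using D_0 D_add D_mult by blast

lemma ideal_in_D_mem_if_comaximal:
  assumes "ideal_in D I" and "u_X ^ N * x \<in> I" and "(1 - u_X) ^ M * x \<in> I"
  shows "x \<in> I"
  by (rule mem_if_comaximal_power_multiples[where u = u_X, OF _ _ _ assms(2,3)])
    (auto intro: ideal_in_add[OF assms(1)] ideal_in_mult[OF assms(1)] u_X_in_D one_minus_u_X_in_D)

definition regular_extension :: "real poly fract set \<Rightarrow> real poly fract set" where
  "regular_extension I = {a \<in> regular_on_reals. \<exists>n. u_X ^ n * a \<in> I}"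

lemma subset_regular_extension: "ideal_in D I \<Longrightarrow> I \<subseteq> regular_extension I"
  unfolding regular_extension_def using D_subset_regular_on_reals
  by (auto dest: ideal_in_subset intro: exI[of _ 0])

lemma ideal_in_regular_extension:
  assumes I: "ideal_in D I"
  shows "ideal_in regular_on_reals (regular_extension I)"
proof -
  have "a + b \<in> regular_extension I"
    if ab: "a \<in> regular_extension I" "b \<in> regular_extension I" for a b
  proof -
    obtain n m where a: "a \<in> regular_on_reals" "u_X ^ n * a \<in> I"
      and b: "b \<in> regular_on_reals" "u_X ^ m * b \<in> I"
      using ab unfolding regular_extension_def by auto
    have "u_X ^ (n + m) * (a + b) = u_X ^ m * (u_X ^ n * a) + u_X ^ n * (u_X ^ m * b)"
      by (simp add: algebra_simps power_add)
    also have "\<dots> \<in> I"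
      using a(2) b(2) by (metis ideal_in_add[OF I] ideal_in_mult[OF I] D_power u_X_in_D)
    finally show ?thesis
      unfolding regular_extension_def using regular_on_reals_add[OF a(1) b(1)] by blast
  qed
  moreover have "c * a \<in> regular_extension I"
    if c: "c \<in> regular_on_reals" and a_ext: "a \<in> regular_extension I" for c a
  proof -
    obtain n where a: "a \<in> regular_on_reals" "u_X ^ n * a \<in> I"
      using a_ext unfolding regular_extension_def by auto
    obtain k where k: "u_X ^ k * c \<in> D"
      using regular_on_reals_imp_u_X_power_mult_in_D[OF c] .
    have "u_X ^ (k + n) * (c * a) = (u_X ^ k * c) * (u_X ^ n * a)"
      by (simp add: algebra_simps power_add)
    also have "\<dots> \<in> I"
      using ideal_in_mult[OF I k a(2)] .
    finally show ?thesis
      unfolding regular_extension_def using regular_on_reals_mult[OF c a(1)] by blast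
  qed
  moreover have "0 \<in> regular_extension I"
    using subset_regular_extension[OF I] ideal_in_0[OF I] by blast
  ultimately show ?thesis
    unfolding ideal_in_def regular_extension_def by blast
qed

lemma ideal_in_regular_on_reals_numerator:
  assumes J: "ideal_in regular_on_reals J" and "x \<in> J"
    and "x = to_fract p / to_fract q" and "to_fract q \<noteq> 0"
  shows "to_fract p \<in> J"
proof -
  have "to_fract p = to_fract q * x"
    using assms(3,4) by simp
  then show ?thesis
    using ideal_in_mult[OF J to_fract_in_regular_on_reals \<open>x \<in> J\<close>] by simp
qed

text \<open>Every ideal of the ring of rational functions without real poles is generated by a
  polynomial, namely a nonzero polynomial of least degree among the numerators of its elements.\<close>
lemma ideal_in_regular_on_reals_principal:
  assumes J: "ideal_in regular_on_reals J"
  obtains g where "to_fract g \<in> J" and "\<And>x. x \<in> J \<Longrightarrow> \<exists>a\<in>regular_on_reals. x = to_fract g * a"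
proof (cases "J \<subseteq> {0}")
  case True
  then show thesis
    using that[of 0] ideal_in_0[OF J] to_fract_in_regular_on_reals[of 0] by auto
next
  case False
  then obtain x0 where "x0 \<in> J" "x0 \<noteq> 0"
    by auto
  moreover obtain p0 q0 where "x0 = to_fract p0 / to_fract q0" "to_fract q0 \<noteq> 0"
    using \<open>x0 \<in> J\<close> ideal_in_subset[OF J] regular_on_reals_elim by blast
  ultimately have "p0 \<noteq> 0 \<and> to_fract p0 \<in> J"
    using ideal_in_regular_on_reals_numerator[OF J] by auto
  then obtain g where g: "g \<noteq> 0" "to_fract g \<in> J"
    and g_least: "\<And>p. p \<noteq> 0 \<and> to_fract p \<in> J \<Longrightarrow> degree g \<le> degree p"
    using ex_has_least_nat[of "\<lambda>p. p \<noteq> 0 \<and> to_fract p \<in> J" p0 degree] by blast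
  have "\<exists>a\<in>regular_on_reals. x = to_fract g * a" if "x \<in> J" for x
  proof -
    obtain p q where x: "x = to_fract p / to_fract q" and q: "\<forall>x. poly q x \<noteq> 0" "to_fract q \<noteq> 0"
      using \<open>x \<in> J\<close> ideal_in_subset[OF J] regular_on_reals_elim by blast
    have "to_fract p \<in> J"
      using ideal_in_regular_on_reals_numerator[OF J \<open>x \<in> J\<close> x q(2)] .
    moreover have "p mod g = p + (- (p div g)) * g"
      by (simp add: minus_div_mult_eq_mod[symmetric])
    then have "to_fract (p mod g) = to_fract p + to_fract (- (p div g)) * to_fract g"
      by (metis to_fract_add to_fract_mult)
    ultimately have "to_fract (p mod g) \<in> J"
      using g(2) by (metis ideal_in_add[OF J] ideal_in_mult[OF J] to_fract_in_regular_on_reals)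
    then have "p mod g = 0"
      using g_least[of "p mod g"] degree_mod_less'[of g p] g(1) by fastforce
    then have "x = to_fract g * (to_fract (p div g) / to_fract q)"
      unfolding x by (metis div_mult_mod_eq add_0_right mult.commute times_divide_eq_right to_fract_mult)
    then show ?thesis
      using regular_on_reals_intro[OF q(1)] by blast
  qed
  then show thesis
    using that g(2) by blast
qed

lemma ideal_in_D_generator_up_to_u_X:
  assumes I: "ideal_in D I"
  obtains y where "y \<in> I" and "\<And>x. x \<in> I \<Longrightarrow> \<exists>m. \<exists>d\<in>D. u_X ^ m * x = y * d"
proof -
  obtain g where g: "to_fract g \<in> regular_extension I"
    and gen: "\<And>x. x \<in> regular_extension I \<Longrightarrow> \<exists>a\<in>regular_on_reals. x = to_fract g * a"
    using ideal_in_regular_on_reals_principal[OF ideal_in_regular_extension[OF I]] by blast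
  from g obtain n where n: "u_X ^ n * to_fract g \<in> I"
    unfolding regular_extension_def by blast
  have "\<exists>m. \<exists>d\<in>D. u_X ^ m * x = (u_X ^ n * to_fract g) * d" if "x \<in> I" for x
  proof -
    obtain a where a: "a \<in> regular_on_reals" "x = to_fract g * a"
      using gen subset_regular_extension[OF I] \<open>x \<in> I\<close> by blast
    obtain k where k: "u_X ^ k * a \<in> D"
      using regular_on_reals_imp_u_X_power_mult_in_D[OF a(1)] .
    have "u_X ^ (n + k) * x = (u_X ^ n * to_fract g) * (u_X ^ k * a)"
      using a(2) by (simp add: power_add algebra_simps)
    then show ?thesis
      using k by blast
  qed
  then show thesis
    using that n by blast
qed

lemma prime_ideal_in_D_cancel_u_X_power:
  assumes P: "prime_ideal_in D P" and "u_X \<notin> P" and "a \<in> D" and "u_X ^ n * a \<in> P"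
  shows "a \<in> P"
proof -
  have "u_X ^ k \<notin> P" for k
  proof (induction k)
    case (Suc k)
    then show ?case
      using prime_ideal_inD(3)[OF P u_X_in_D D_power[OF u_X_in_D]] \<open>u_X \<notin> P\<close> by auto
  qed (use prime_ideal_inD(2)[OF P] in simp)
  then show ?thesis
    using prime_ideal_inD(3)[OF P D_power[OF u_X_in_D] assms(3,4)] by blast
qed

lemma regular_extension_mem_D_imp_mem:
  assumes "prime_ideal_in D P" and "u_X \<notin> P" and "a \<in> D" and "a \<in> regular_extension P"
  shows "a \<in> P"
  using assms prime_ideal_in_D_cancel_u_X_power unfolding regular_extension_def by blast

lemma regular_extension_prime:
  assumes P: "prime_ideal_in D P" and "u_X \<notin> P"
    and a: "a \<in> regular_on_reals" and b: "b \<in> regular_on_reals" and "a * b \<in> regular_extension P"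
  shows "a \<in> regular_extension P \<or> b \<in> regular_extension P"
proof -
  obtain n where n: "u_X ^ n * (a * b) \<in> P"
    using assms(5) unfolding regular_extension_def by blast
  obtain k where k: "u_X ^ k * a \<in> D"
    using regular_on_reals_imp_u_X_power_mult_in_D[OF a] .
  obtain l where l: "u_X ^ l * b \<in> D"
    using regular_on_reals_imp_u_X_power_mult_in_D[OF b] .
  have "u_X ^ n * ((u_X ^ k * a) * (u_X ^ l * b)) = u_X ^ (k + l) * (u_X ^ n * (a * b))"
    by (simp add: power_add algebra_simps)
  also have "\<dots> \<in> P"
    using ideal_in_mult[OF prime_ideal_inD(1)[OF P] D_power[OF u_X_in_D] n] .
  finally have "(u_X ^ k * a) * (u_X ^ l * b) \<in> P"
    using prime_ideal_in_D_cancel_u_X_power[OF P \<open>u_X \<notin> P\<close>] D_mult[OF k l] by blast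
  then have "u_X ^ k * a \<in> P \<or> u_X ^ l * b \<in> P"
    using prime_ideal_inD(3)[OF P k l] by blast
  then show ?thesis
    unfolding regular_extension_def using a b by blast
qed

text \<open>If u_X \<notin> P, the ideal P corresponds to a nonzero prime ideal (g) of the principal ideal
  domain of rational functions without real poles, and a strictly larger ideal Q can only
  correspond to the unit ideal; hence some power of u_X lies in Q.\<close>
lemma u_X_power_in_ideal_above_prime:
  assumes P: "prime_ideal_in D P" and "z \<in> P" "z \<noteq> 0" and "u_X \<notin> P"
    and Q: "ideal_in D Q" and "P \<subseteq> Q" and "x \<in> Q" "x \<notin> P"
  obtains N where "u_X ^ N \<in> Q"
proof -
  have IP: "ideal_in D P"
    using prime_ideal_inD(1)[OF P] .
  obtain g where g: "to_fract g \<in> regular_extension P"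
    and gen: "\<And>x. x \<in> regular_extension P \<Longrightarrow> \<exists>a\<in>regular_on_reals. x = to_fract g * a"
    using ideal_in_regular_on_reals_principal[OF ideal_in_regular_extension[OF IP]] by blast
  obtain g' where g': "to_fract g' \<in> regular_extension Q"
    and gen': "\<And>x. x \<in> regular_extension Q \<Longrightarrow> \<exists>a\<in>regular_on_reals. x = to_fract g' * a"
    using ideal_in_regular_on_reals_principal[OF ideal_in_regular_extension[OF Q]] by blast
  have "to_fract g \<in> regular_extension Q"
    using g \<open>P \<subseteq> Q\<close> unfolding regular_extension_def by blast
  then obtain c where c: "c \<in> regular_on_reals" "to_fract g = to_fract g' * c"
    using gen' by blast
  then have "to_fract g' \<in> regular_extension P \<or> c \<in> regular_extension P"
    using regular_extension_prime[OF P \<open>u_X \<notin> P\<close> to_fract_in_regular_on_reals] g by simp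
  then have "1 \<in> regular_extension Q"
  proof
    assume "to_fract g' \<in> regular_extension P"
    moreover obtain a where "a \<in> regular_on_reals" "x = to_fract g' * a"
      using gen' subset_regular_extension[OF Q] \<open>x \<in> Q\<close> by blast
    ultimately have "x \<in> regular_extension P"
      using ideal_in_mult[OF ideal_in_regular_extension[OF IP]] by (simp add: mult.commute)
    then have "x \<in> P"
      using regular_extension_mem_D_imp_mem[OF P \<open>u_X \<notin> P\<close>] ideal_in_subset[OF Q] \<open>x \<in> Q\<close>
      by blast
    with \<open>x \<notin> P\<close> show ?thesis
      by blast
  next
    assume "c \<in> regular_extension P"
    then obtain d where d: "d \<in> regular_on_reals" "c = to_fract g * d"
      using gen by blast
    obtain a where "z = to_fract g * a"
      using gen subset_regular_extension[OF IP] \<open>z \<in> P\<close> by blast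
    then have "to_fract g \<noteq> 0"
      using \<open>z \<noteq> 0\<close> by auto
    moreover have "to_fract g * 1 = to_fract g * (to_fract g' * d)"
      using c(2) d(2) by (simp add: algebra_simps)
    ultimately have "d * to_fract g' = 1"
      by (simp add: mult.commute)
    then show ?thesis
      using ideal_in_mult[OF ideal_in_regular_extension[OF Q] d(1) g'] by simp
  qed
  then show thesis
    using that unfolding regular_extension_def by auto
qed

section \<open>The substitution X \<mapsto> 1 / X\<close>

lemma X_fract_nonzero: "X_fract \<noteq> 0"
  unfolding X_fract_def by simp

lemma subst_fract_inverse_X_nonzero:
  assumes "p \<noteq> 0"
  shows "subst_fract p (inverse X_fract) \<noteq> 0"
proof -
  let ?P = "map_poly const_fract p"
  have "degree ?P = degree p"
    by (rule degree_map_poly) simp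
  then have "reflect_poly ?P = map_poly const_fract (reflect_poly p)"
    by (intro poly_eqI) (simp add: coeff_reflect_poly coeff_map_poly)
  then have "to_fract (reflect_poly p) = X_fract ^ degree ?P * subst_fract p (inverse X_fract)"
    using poly_reflect_poly_nz[OF X_fract_nonzero, of ?P]
    by (simp add: to_fract_eq_subst_X subst_fract_def)
  then show ?thesis
    using assms by auto
qed

definition recip_subst :: "real poly fract \<Rightarrow> real poly fract" where
  "recip_subst x = subst_fract (fst (quot_of_fract x)) (inverse X_fract)
      / subst_fract (snd (quot_of_fract x)) (inverse X_fract)"

lemma recip_subst_frac:
  assumes "q \<noteq> 0"
  shows "recip_subst (to_fract p / to_fract q) = subst_fract p (inverse X_fract) / subst_fract q (inverse X_fract)"
proof -
  define x where "x = to_fract p / to_fract q"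
  define a b where "a = fst (quot_of_fract x)" and "b = snd (quot_of_fract x)"
  have "b \<noteq> 0"
    unfolding b_def by (rule snd_quot_of_fract_nonzero)
  have "to_fract a / to_fract b = to_fract p / to_fract q"
    unfolding a_def b_def x_def[symmetric] by (rule fract_eq_quot_of_fract[symmetric])
  then have "to_fract a * to_fract q = to_fract p * to_fract b"
    using \<open>b \<noteq> 0\<close> assms by (simp add: frac_eq_eq)
  then have "a * q = p * b"
    by (metis to_fract_eq_iff to_fract_mult)
  then have "subst_fract a (inverse X_fract) * subst_fract q (inverse X_fract)
      = subst_fract p (inverse X_fract) * subst_fract b (inverse X_fract)"
    by (simp flip: subst_fract_mult)
  then show ?thesis
    using subst_fract_inverse_X_nonzero[OF \<open>b \<noteq> 0\<close>] subst_fract_inverse_X_nonzero[OF assms]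
    unfolding x_def[symmetric] recip_subst_def a_def[symmetric] b_def[symmetric]
    by (simp add: frac_eq_eq)
qed

lemma recip_subst_to_fract: "recip_subst (to_fract p) = subst_fract p (inverse X_fract)"
  using recip_subst_frac[of 1 p] by simp

lemma recip_subst_add: "recip_subst (x + y) = recip_subst x + recip_subst y"
proof -
  let ?S = "\<lambda>p. subst_fract p (inverse X_fract)"
  obtain p q where q: "q \<noteq> 0" and x: "x = to_fract p / to_fract q"
    by (rule fract_as_quotient)
  obtain p' q' where q': "q' \<noteq> 0" and y: "y = to_fract p' / to_fract q'"
    by (rule fract_as_quotient)
  have "q * q' \<noteq> 0"
    using q q' by simp
  have "x + y = to_fract (p * q' + p' * q) / to_fract (q * q')"
    using q q' unfolding x y by (simp add: field_simps)
  then have "recip_subst (x + y) = ?S (p * q' + p' * q) / ?S (q * q')"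
    by (simp only: recip_subst_frac[OF \<open>q * q' \<noteq> 0\<close>])
  also have "\<dots> = (?S p * ?S q' + ?S p' * ?S q) / (?S q * ?S q')"
    by (simp only: subst_fract_add subst_fract_mult)
  also have "\<dots> = ?S p / ?S q + ?S p' / ?S q'"
    using subst_fract_inverse_X_nonzero[OF q] subst_fract_inverse_X_nonzero[OF q']
    by (simp add: add_frac_eq)
  also have "\<dots> = recip_subst x + recip_subst y"
    by (simp only: x y recip_subst_frac[OF q] recip_subst_frac[OF q'])
  finally show ?thesis .
qed

lemma recip_subst_mult: "recip_subst (x * y) = recip_subst x * recip_subst y"
proof -
  obtain p q where q: "q \<noteq> 0" and x: "x = to_fract p / to_fract q"
    by (rule fract_as_quotient)
  obtain p' q' where q': "q' \<noteq> 0" and y: "y = to_fract p' / to_fract q'"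
    by (rule fract_as_quotient)
  have "q * q' \<noteq> 0"
    using q q' by simp
  have "x * y = to_fract (p * p') / to_fract (q * q')"
    unfolding x y by simp
  then show ?thesis
    by (simp only: x y recip_subst_frac[OF q] recip_subst_frac[OF q'] recip_subst_frac[OF \<open>q * q' \<noteq> 0\<close>]
        subst_fract_mult times_divide_times_eq)
qed

lemma recip_subst_0 [simp]: "recip_subst 0 = 0"
  using recip_subst_to_fract[of 0] by simp

lemma recip_subst_1 [simp]: "recip_subst 1 = 1"
  using recip_subst_to_fract[of 1] by simp

lemma recip_subst_const_fract [simp]: "recip_subst (const_fract c) = const_fract c"
  using recip_subst_to_fract[of "[:c:]"] by (simp flip: const_fract_def)

lemma recip_subst_X_fract [simp]: "recip_subst X_fract = inverse X_fract"
  using recip_subst_to_fract[of "[:0, 1:]"] by (simp add: subst_fract_pCons flip: X_fract_def)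

lemma recip_subst_uminus: "recip_subst (- x) = - recip_subst x"
  using recip_subst_add[of x "- x"] by (simp add: eq_neg_iff_add_eq_0)

lemma recip_subst_diff: "recip_subst (x - y) = recip_subst x - recip_subst y"
  using recip_subst_add[of x "- y"] by (simp add: recip_subst_uminus)

lemma recip_subst_power: "recip_subst (x ^ n) = recip_subst x ^ n"
  by (induction n) (simp_all add: recip_subst_mult)

lemma recip_subst_inverse: "recip_subst (inverse x) = inverse (recip_subst x)"
proof (cases "x = 0")
  case False
  then have "recip_subst x * recip_subst (inverse x) = 1"
    by (simp flip: recip_subst_mult)
  then show ?thesis
    by (metis inverse_unique mult.commute)
qed simp

lemma recip_subst_divide: "recip_subst (x / y) = recip_subst x / recip_subst y"
  by (simp add: divide_inverse recip_subst_mult recip_subst_inverse)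

lemma recip_subst_subst_fract: "recip_subst (subst_fract p t) = subst_fract p (recip_subst t)"
  by (induction p) (simp_all add: subst_fract_pCons recip_subst_add recip_subst_mult)

lemma recip_subst_recip_subst [simp]: "recip_subst (recip_subst x) = x"
proof -
  have "recip_subst (recip_subst (to_fract p)) = to_fract p" for p
    by (simp add: recip_subst_to_fract recip_subst_subst_fract recip_subst_inverse
        flip: to_fract_eq_subst_X)
  moreover obtain p q where "x = to_fract p / to_fract q"
    by (rule fract_as_quotient)
  ultimately show ?thesis
    by (simp add: recip_subst_divide)
qed

lemma recip_subst_u_X: "recip_subst u_X = 1 - u_X"
proof -
  have "1 + X_fract ^ 2 \<noteq> 0"
    unfolding one_plus_X_square by simp
  moreover have "X_fract ^ 2 \<noteq> 0"
    using X_fract_nonzero by simp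
  ultimately show ?thesis
    unfolding u_X_def
    by (simp add: recip_subst_divide recip_subst_add recip_subst_power field_simps power_inverse)
qed

lemma recip_subst_in_D: "x \<in> D \<Longrightarrow> recip_subst x \<in> D"
proof -
  have "D \<subseteq> {x. recip_subst x \<in> D}"
  proof (rule D_minimal)
    show "is_subring {x. recip_subst x \<in> D}"
      unfolding is_subring_def
      by (simp add: recip_subst_add recip_subst_diff recip_subst_mult D_0 D_1 D_add D_diff D_mult)
    show "1 / (1 + h^2) \<in> {x. recip_subst x \<in> D}" for h
      by (simp add: recip_subst_divide recip_subst_add recip_subst_power inverse_one_plus_square_in_D)
  qed
  then show "x \<in> D \<Longrightarrow> recip_subst x \<in> D"
    by blast
qed

lemma ideal_in_D_recip_subst_image: "ideal_in D I \<Longrightarrow> ideal_in D (recip_subst ` I)"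
  by (rule ideal_in_image_involution[OF recip_subst_add recip_subst_mult recip_subst_recip_subst
        recip_subst_in_D])

lemma prime_ideal_in_D_recip_subst_image: "prime_ideal_in D P \<Longrightarrow> prime_ideal_in D (recip_subst ` P)"
  by (rule prime_ideal_in_image_involution[OF recip_subst_add recip_subst_mult recip_subst_recip_subst
        recip_subst_in_D recip_subst_1])

section \<open>D is a Dedekind domain\<close>

text \<open>Applied to P and to its image under X \<mapsto> 1 / X, which swaps u_X and 1 - u_X,
  u_X_power_in_ideal_above_prime puts powers of both u_X and 1 - u_X into J.\<close>
lemma one_in_ideal_above_nonzero_prime:
  assumes P: "prime_ideal_in D P" and "z \<in> P" "z \<noteq> 0"
    and J: "ideal_in D J" and "P \<subseteq> J" and "x \<in> J" "x \<notin> P"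
  shows "1 \<in> J"
proof -
  have "\<exists>N. u_X ^ N \<in> J"
  proof (cases "u_X \<in> P")
    case True
    then show ?thesis
      using \<open>P \<subseteq> J\<close> by (metis power_one_right subsetD)
  next
    case False
    then show ?thesis
      using u_X_power_in_ideal_above_prime[OF P assms(2,3) False J assms(5-7)] by metis
  qed
  moreover have "\<exists>M. (1 - u_X) ^ M \<in> J"
  proof (cases "1 - u_X \<in> P")
    case True
    then show ?thesis
      using \<open>P \<subseteq> J\<close> by (metis power_one_right subsetD)
  next
    case False
    have mem: "recip_subst y \<in> recip_subst ` I \<longleftrightarrow> y \<in> I" for y I
      by (metis image_iff recip_subst_recip_subst)
    have "recip_subst (1 - u_X) = u_X"
      by (simp add: recip_subst_diff recip_subst_u_X)
    then have "u_X \<notin> recip_subst ` P"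
      using False mem by metis
    moreover have "recip_subst z \<noteq> 0"
      using \<open>z \<noteq> 0\<close> by (metis recip_subst_recip_subst recip_subst_0)
    ultimately obtain N where "u_X ^ N \<in> recip_subst ` J"
      using u_X_power_in_ideal_above_prime[OF prime_ideal_in_D_recip_subst_image[OF P], of "recip_subst z"
          "recip_subst ` J" "recip_subst x"] ideal_in_D_recip_subst_image[OF J] assms(2,5-7) mem
      by blast
    then have "recip_subst (u_X ^ N) \<in> J"
      using mem by (metis recip_subst_recip_subst)
    then show ?thesis
      by (auto simp: recip_subst_power recip_subst_u_X)
  qed
  ultimately show ?thesis
    using ideal_in_D_mem_if_comaximal[OF J, of _ 1] by auto
qed

lemma integrally_closed_sub_D: "integrally_closed_sub D"
  unfolding integrally_closed_sub_def
proof (intro ballI impI)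
  fix x
  assume x: "integral_over D x"
  obtain n where "u_X ^ n * x \<in> D"
    using regular_on_reals_imp_u_X_power_mult_in_D[OF integral_over_D_imp_regular_on_reals[OF x]] .
  moreover have "integral_over D (recip_subst x)"
    using integral_over_image_involution[OF recip_subst_add recip_subst_mult recip_subst_recip_subst
        recip_subst_1 recip_subst_in_D x] .
  then obtain m where "u_X ^ m * recip_subst x \<in> D"
    using regular_on_reals_imp_u_X_power_mult_in_D[OF integral_over_D_imp_regular_on_reals] by blast
  then have "(1 - u_X) ^ m * x \<in> D"
    using recip_subst_in_D by (fastforce simp: recip_subst_mult recip_subst_power recip_subst_u_X)
  ultimately show "x \<in> D"
    by (rule ideal_in_D_mem_if_comaximal[OF ideal_in_D_D])
qed

abbreviation D_ring :: "real poly fract ring" where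
  "D_ring \<equiv> sub_ring_struct D"

lemma D_ring_simps [simp]:
  "carrier D_ring = D" "monoid.mult D_ring = (*)" "one D_ring = 1" "zero D_ring = 0" "add D_ring = (+)"
  by (simp_all add: sub_ring_struct_def)

lemma domain_D_ring: "domain D_ring"
proof (rule domain.intro)
  show "cring D_ring"
  proof (rule cringI)
    show "abelian_group D_ring"
      by (rule abelian_groupI) (auto simp: D_add D_0 intro!: bexI[of _ "- x" for x] D_uminus)
    show "comm_monoid D_ring"
      by (rule comm_monoidI) (auto simp: D_mult D_1)
  qed (simp add: algebra_simps)
  show "domain_axioms D_ring"
    by (rule domain_axioms.intro) auto
qed

interpretation D_ring: domain D_ring
  by (rule domain_D_ring)

lemma ideal_imp_ideal_in: "ideal I D_ring \<Longrightarrow> ideal_in D I"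
  unfolding ideal_in_def
  using ideal.axioms(1) additive_subgroup.a_subset ideal.I_l_closed
    additive_subgroup.zero_closed additive_subgroup.a_closed by fastforce

text \<open>An ideal I is generated by y and by the image of y' under X \<mapsto> 1 / X, where y and y'
  generate I and its image up to powers of u_X; membership of x then follows by comaximality.\<close>
lemma noetherian_domain_D_ring: "noetherian_domain D_ring"
proof (intro noetherian_domain.intro noetherian_ring.intro noetherian_ring_axioms.intro domain_D_ring
    D_ring.ring_axioms)
  fix I
  assume "ideal I D_ring"
  then have I: "ideal_in D I"
    by (rule ideal_imp_ideal_in)
  obtain y where y: "y \<in> I" and y_gen: "\<And>x. x \<in> I \<Longrightarrow> \<exists>m. \<exists>d\<in>D. u_X ^ m * x = y * d"
    using ideal_in_D_generator_up_to_u_X[OF I] by blast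
  obtain y' where y': "y' \<in> recip_subst ` I"
    and y'_gen: "\<And>x. x \<in> recip_subst ` I \<Longrightarrow> \<exists>m. \<exists>d\<in>D. u_X ^ m * x = y' * d"
    using ideal_in_D_generator_up_to_u_X[OF ideal_in_D_recip_subst_image[OF I]] by blast
  define A where "A = {y, recip_subst y'}"
  have "A \<subseteq> I"
    unfolding A_def using y y' by auto
  then have "A \<subseteq> carrier D_ring"
    using ideal_in_subset[OF I] by auto
  define K where "K = genideal D_ring A"
  have K: "ideal_in D K"
    unfolding K_def by (rule ideal_imp_ideal_in[OF D_ring.genideal_ideal[OF \<open>A \<subseteq> carrier D_ring\<close>]])
  have "A \<subseteq> K"
    unfolding K_def by (rule D_ring.genideal_self[OF \<open>A \<subseteq> carrier D_ring\<close>])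
  have "I \<subseteq> K"
  proof
    fix x
    assume "x \<in> I"
    obtain m d where "d \<in> D" "u_X ^ m * x = y * d"
      using y_gen[OF \<open>x \<in> I\<close>] by blast
    then have "u_X ^ m * x \<in> K"
      using ideal_in_mult[OF K \<open>d \<in> D\<close>, of y] \<open>A \<subseteq> K\<close> unfolding A_def by (simp add: mult.commute)
    moreover obtain m' d' where "d' \<in> D" "u_X ^ m' * recip_subst x = y' * d'"
      using y'_gen \<open>x \<in> I\<close> by blast
    then have "(1 - u_X) ^ m' * x = recip_subst y' * recip_subst d'"
      by (metis recip_subst_mult recip_subst_power recip_subst_u_X recip_subst_recip_subst)
    then have "(1 - u_X) ^ m' * x \<in> K"
      using ideal_in_mult[OF K recip_subst_in_D[OF \<open>d' \<in> D\<close>], of "recip_subst y'"] \<open>A \<subseteq> K\<close>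
      unfolding A_def by (simp add: mult.commute)
    ultimately show "x \<in> K"
      by (rule ideal_in_D_mem_if_comaximal[OF K])
  qed
  then have "I = genideal D_ring A"
    using D_ring.genideal_minimal[OF \<open>ideal I D_ring\<close> \<open>A \<subseteq> I\<close>] unfolding K_def by blast
  then show "\<exists>A \<subseteq> carrier D_ring. finite A \<and> I = genideal D_ring A"
    using \<open>A \<subseteq> carrier D_ring\<close> unfolding A_def by blast
qed

lemma nonzero_primeideal_D_ring_maximal:
  assumes "primeideal P D_ring" and "P \<noteq> {0}"
  shows "maximalideal P D_ring"
proof -
  interpret primeideal P D_ring
    by fact
  have "ideal P D_ring"
    by (rule is_ideal)
  then have "ideal_in D P"
    by (rule ideal_imp_ideal_in)
  have "1 \<notin> P"
    using I_notcarr one_imp_carrier by auto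
  then have P: "prime_ideal_in D P"
    unfolding prime_ideal_in_def using \<open>ideal_in D P\<close> I_prime by auto
  obtain z where "z \<in> P" "z \<noteq> 0"
    using \<open>P \<noteq> {0}\<close> ideal_in_0[OF \<open>ideal_in D P\<close>] by blast
  show ?thesis
  proof (rule maximalidealI[OF \<open>ideal P D_ring\<close> I_notcarr])
    fix J
    assume J: "ideal J D_ring" and "P \<subseteq> J"
    show "J = P \<or> J = carrier D_ring"
    proof (cases "J = P")
      case False
      then obtain x where "x \<in> J" "x \<notin> P"
        using \<open>P \<subseteq> J\<close> by blast
      then have "1 \<in> J"
        using one_in_ideal_above_nonzero_prime[OF P \<open>z \<in> P\<close> \<open>z \<noteq> 0\<close> ideal_imp_ideal_in[OF J] \<open>P \<subseteq> J\<close>]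
        by blast
      then show ?thesis
        using ideal.one_imp_carrier[OF J] by simp
    qed simp
  qed
qed

theorem theorem2p3:
  shows "Dedekind_subring minimal_Dress_ring"
  unfolding Dedekind_subring_def
  using noetherian_domain_D_ring integrally_closed_sub_D nonzero_primeideal_D_ring_maximal by blast

end
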